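(* Assume $\mathfrak{d}=\omega_1$, and let $\langle f_\alpha:\alpha<\omega_1\rangle$ be functions in ${}^\omega\omega$ with $f_\alpha<^*f_\beta$ whenever $\alpha<\beta$ and such that every $g\in{}^\omega\omega$ satisfies $g<^*f_\alpha$ for some $\alpha$. Let $\{P_i:i<\omega\}$ be a partition of $\omega$ into infinite sets, $Z_\alpha=\{n:\exists i\,(n\in P_i\text{ and }n>f_\alpha(i))\}$, and let $X$ be the space on $(\omega\times\omega_1)\cup\{\infty\}$ with points of $\omega\times\omega_1$ isolated and a local subbase at $\infty$ consisting of the sets $X\setminus(P_i\times\omega_1)$ ($i<\omega$) and $X\setminus(Z_\alpha\times\alpha)$ ($\alpha<\omega_1$). Then $X$ is not $U$-selective for any ultrafilter $U$ on $\omega$ which is not a $P$-point.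
   Context: $f<^*g$ means $f(n)<g(n)$ for all but finitely many $n$. $\mathcal{F}(X)$ is the set of nonempty closed subsets of $X$; $\varphi:Y\rightarrow\mathcal{F}(X)$ is lower semicontinuous if for every open $W\subseteq X$, $\{y:\varphi(y)\cap W\neq\emptyset\}$ is open in $Y$. $X$ is $Y$-selective if every lower semicontinuous $\varphi:Y\rightarrow\mathcal{F}(X)$ has a continuous selection. For a filter $U$ on $\omega$, $Y_U$ is the space on $\omega\cup\{\infty\}$ with points of $\omega$ isolated and neighborhoods of $\infty$ the sets $A\cup\{\infty\}$, $A\in U$; $U$-selective means $Y_U$-selective. An ultrafilter $U$ on $\omega$ is a $P$-point if every function $\omega\rightarrow\omega$ is either constant or finite-to-one on some set in $U$. *)

theory Defs
  imports "HOL-Analysis.Analysis"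
begin

definition less_star :: "(nat \<Rightarrow> nat) \<Rightarrow> (nat \<Rightarrow> nat) \<Rightarrow> bool" where
  "less_star f g \<longleftrightarrow> finite {n. \<not> f n < g n}"

definition le_star :: "(nat \<Rightarrow> nat) \<Rightarrow> (nat \<Rightarrow> nat) \<Rightarrow> bool" where
  "le_star f g \<longleftrightarrow> finite {n. \<not> f n \<le> g n}"

definition dominating :: "(nat \<Rightarrow> nat) set \<Rightarrow> bool" where
  "dominating D \<longleftrightarrow> (\<forall>g. \<exists>f\<in>D. le_star g f)"

text \<open>A relation r on the type 'a is (an isomorphic copy of) omega_1:
  a well-order on all of 'a, uncountable, with all proper initial segments countable.\<close>
definition is_omega1 :: "('a \<times> 'a) set \<Rightarrow> bool" where
  "is_omega1 r \<longleftrightarrow> Well_order r \<and> Field r = UNIV \<and> \<not> countable (UNIV :: 'a set)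
     \<and> (\<forall>a. countable (Order_Relation.underS r a))"

text \<open>d = omega_1, with omega_1 represented by the type 'a (well-ordered by r):
  no countable family is dominating, and some family indexed by omega_1 is dominating.\<close>
definition dominating_number_is_omega1 :: "'a itself \<Rightarrow> bool" where
  "dominating_number_is_omega1 _ \<longleftrightarrow>
     (\<forall>D. dominating D \<longrightarrow> \<not> countable D) \<and> (\<exists>e :: 'a \<Rightarrow> nat \<Rightarrow> nat. dominating (range e))"

definition is_filter :: "nat set set \<Rightarrow> bool" where
  "is_filter U \<longleftrightarrow> UNIV \<in> U \<and> {} \<notin> U \<and> (\<forall>A B. A \<in> U \<longrightarrow> A \<subseteq> B \<longrightarrow> B \<in> U)
     \<and> (\<forall>A B. A \<in> U \<longrightarrow> B \<in> U \<longrightarrow> A \<inter> B \<in> U)"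

definition is_ultrafilter :: "nat set set \<Rightarrow> bool" where
  "is_ultrafilter U \<longleftrightarrow> is_filter U \<and> (\<forall>A. A \<in> U \<or> - A \<in> U)"

definition P_point :: "nat set set \<Rightarrow> bool" where
  "P_point U \<longleftrightarrow> is_ultrafilter U \<and>
     (\<forall>h :: nat \<Rightarrow> nat. \<exists>A\<in>U. (\<exists>c. \<forall>n\<in>A. h n = c) \<or> (\<forall>m. finite {n\<in>A. h n = m}))"

text \<open>The space Y_U on omega \<union> {\<infinity>}; None plays the role of \<infinity>.\<close>
definition Y_space :: "nat set set \<Rightarrow> nat option topology" where
  "Y_space U = topology (\<lambda>V. None \<in> V \<longrightarrow> {n. Some n \<in> V} \<in> U)"

definition lsc :: "'b topology \<Rightarrow> 'c topology \<Rightarrow> ('b \<Rightarrow> 'c set) \<Rightarrow> bool" where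
  "lsc Y X \<phi> \<longleftrightarrow> (\<forall>y\<in>topspace Y. \<phi> y \<noteq> {} \<and> closedin X (\<phi> y))
     \<and> (\<forall>W. openin X W \<longrightarrow> openin Y {y\<in>topspace Y. \<phi> y \<inter> W \<noteq> {}})"

definition selective :: "'c topology \<Rightarrow> 'b topology \<Rightarrow> bool" where
  "selective X Y \<longleftrightarrow> (\<forall>\<phi>. lsc Y X \<phi> \<longrightarrow>
     (\<exists>s. continuous_map Y X s \<and> (\<forall>y\<in>topspace Y. s y \<in> \<phi> y)))"

definition U_selective :: "'c topology \<Rightarrow> nat set set \<Rightarrow> bool" where
  "U_selective X U \<longleftrightarrow> selective X (Y_space U)"

definition Zset :: "(nat \<Rightarrow> nat set) \<Rightarrow> (nat \<Rightarrow> nat) \<Rightarrow> nat set" where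
  "Zset P g = {n. \<exists>i. n \<in> P i \<and> n > g i}"

text \<open>The space X on (omega \<times> omega_1) \<union> {\<infinity>} (None = \<infinity>): generated by the subbase consisting of
  all singletons of points of omega \<times> omega_1 together with X - (P_i \<times> omega_1) and
  X - (Z_alpha \<times> alpha).\<close>
definition X_space :: "('a \<times> 'a) set \<Rightarrow> (nat \<Rightarrow> nat set) \<Rightarrow> ('a \<Rightarrow> nat \<Rightarrow> nat)
    \<Rightarrow> (nat \<times> 'a) option topology" where
  "X_space r P f = topology_generated_by
     ((\<lambda>p. {Some p}) ` UNIV
      \<union> (\<lambda>i. UNIV - Some ` (P i \<times> UNIV)) ` UNIV
      \<union> (\<lambda>\<alpha>. UNIV - Some ` (Zset P (f \<alpha>) \<times> Order_Relation.underS r \<alpha>)) ` UNIV)"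

end

theory Submission
  imports Defs
begin

text \<open>A non-P-point U carries a function h none of whose fibres is in U but which is
  finite-to-one on no set in U. Sending \<infinity> to {\<infinity>} and n to the points of column P_(h n)
  above n is lower semicontinuous, because a neighbourhood of \<infinity> contains, in all but
  finitely many columns, every point above some level of \<omega>_1. A continuous selection s takes
  countably many values, all below some level \<alpha> < \<omega>_1; continuity at \<infinity> for the
  neighbourhood X - (Z_\<alpha> \<times> \<alpha>) gives a set in U on which the first coordinate of s n, which
  exceeds n and lies in P_(h n), is at most f_\<alpha> (h n). Hence h is finite-to-one on that set.\<close>

lemma istopology_Y_space:
  assumes "is_filter U"
  shows "istopology (\<lambda>V. None \<in> V \<longrightarrow> {n. Some n \<in> V} \<in> U)"
  unfolding istopology_def
proof (intro conjI allI impI)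
  fix S T :: "nat option set"
  assume "None \<in> S \<longrightarrow> {n. Some n \<in> S} \<in> U" "None \<in> T \<longrightarrow> {n. Some n \<in> T} \<in> U"
    and "None \<in> S \<inter> T"
  then have "{n. Some n \<in> S} \<inter> {n. Some n \<in> T} \<in> U"
    using assms unfolding is_filter_def by auto
  moreover have "{n. Some n \<in> S} \<inter> {n. Some n \<in> T} = {n. Some n \<in> S \<inter> T}" by auto
  ultimately show "{n. Some n \<in> S \<inter> T} \<in> U" by simp
next
  fix K :: "nat option set set"
  assume K: "\<forall>S\<in>K. None \<in> S \<longrightarrow> {n. Some n \<in> S} \<in> U" and "None \<in> \<Union>K"
  then obtain S where "S \<in> K" "None \<in> S" by auto
  with K have "{n. Some n \<in> S} \<in> U" by auto
  moreover have "{n. Some n \<in> S} \<subseteq> {n. Some n \<in> \<Union>K}" using \<open>S \<in> K\<close> by auto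
  ultimately show "{n. Some n \<in> \<Union>K} \<in> U" using assms unfolding is_filter_def by blast
qed

lemma openin_Y_space:
  assumes "is_filter U"
  shows "openin (Y_space U) V \<longleftrightarrow> (None \<in> V \<longrightarrow> {n. Some n \<in> V} \<in> U)"
  unfolding Y_space_def using istopology_Y_space[OF assms] by simp

lemma topspace_Y_space:
  assumes "is_filter U"
  shows "topspace (Y_space U) = UNIV"
proof -
  have "openin (Y_space U) UNIV" using assms by (simp add: openin_Y_space is_filter_def)
  then show ?thesis using openin_subset by blast
qed

lemma not_P_point_witness:
  assumes "is_ultrafilter U" "\<not> P_point U"
  obtains h :: "nat \<Rightarrow> nat"
  where "\<And>c. h -` {c} \<notin> U" and "\<And>A. A \<in> U \<Longrightarrow> \<exists>m. infinite {n\<in>A. h n = m}"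
proof -
  from assms obtain h :: "nat \<Rightarrow> nat" where
    h: "\<And>A. A \<in> U \<Longrightarrow> (\<forall>c. \<exists>n\<in>A. h n \<noteq> c) \<and> (\<exists>m. infinite {n\<in>A. h n = m})"
    unfolding P_point_def by blast
  have "h -` {c} \<notin> U" for c
    using h[of "h -` {c}"] by auto
  with h show thesis using that by blast
qed

lemma ultrafilter_avoids_finitely_many_fibres:
  assumes "is_ultrafilter U" "\<And>c. h -` {c} \<notin> U" "finite F"
  shows "{n. h n \<notin> F} \<in> U"
  using assms(3)
proof induction
  case empty
  then show ?case using assms(1) unfolding is_ultrafilter_def is_filter_def by simp
next
  case (insert c F)
  have "- (h -` {c}) \<in> U" using assms(1,2) unfolding is_ultrafilter_def by blast
  with insert.IH have "{n. h n \<notin> F} \<inter> - (h -` {c}) \<in> U"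
    using assms(1) unfolding is_ultrafilter_def is_filter_def by blast
  moreover have "{n. h n \<notin> F} \<inter> - (h -` {c}) = {n. h n \<notin> insert c F}" by auto
  ultimately show ?case by simp
qed

lemma omega1_countable_bounded:
  assumes "is_omega1 r" "countable B"
  obtains \<alpha> where "B \<subseteq> Order_Relation.underS r \<alpha>"
proof -
  have "countable (\<Union>\<beta>\<in>B. insert \<beta> (Order_Relation.underS r \<beta>))"
    using assms unfolding is_omega1_def by auto
  moreover have "\<not> countable (UNIV :: 'a set)" using assms(1) unfolding is_omega1_def by auto
  ultimately obtain \<alpha> where \<alpha>: "\<alpha> \<notin> (\<Union>\<beta>\<in>B. insert \<beta> (Order_Relation.underS r \<beta>))"
    by (metis UNIV_eq_I)
  have "total_on UNIV r"
    using assms(1) unfolding is_omega1_def well_order_on_def linear_order_on_def by metis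
  with \<alpha> have "B \<subseteq> Order_Relation.underS r \<alpha>"
    unfolding Order_Relation.underS_def total_on_def by blast
  then show thesis by (rule that)
qed

lemma omega1_above_finite:
  assumes "is_omega1 r" "finite G"
  obtains \<beta> where "\<forall>\<alpha>\<in>G. \<beta> \<notin> Order_Relation.underS r \<alpha>"
proof -
  have "countable (\<Union>\<alpha>\<in>G. Order_Relation.underS r \<alpha>)"
    using assms unfolding is_omega1_def by (auto intro: countable_finite)
  moreover have "\<not> countable (UNIV :: 'a set)" using assms(1) unfolding is_omega1_def by auto
  ultimately show thesis using that by (metis UNIV_eq_I UN_I)
qed

definition X_subbase :: "('a \<times> 'a) set \<Rightarrow> (nat \<Rightarrow> nat set) \<Rightarrow> ('a \<Rightarrow> nat \<Rightarrow> nat)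
    \<Rightarrow> (nat \<times> 'a) option set set" where
  "X_subbase r P f =
     (\<lambda>p. {Some p}) ` UNIV
     \<union> (\<lambda>i. UNIV - Some ` (P i \<times> UNIV)) ` UNIV
     \<union> (\<lambda>\<alpha>. UNIV - Some ` (Zset P (f \<alpha>) \<times> Order_Relation.underS r \<alpha>)) ` UNIV"

lemma openin_X_space_iff: "openin (X_space r P f) W \<longleftrightarrow> generate_topology_on (X_subbase r P f) W"
  unfolding X_space_def X_subbase_def openin_topology_generated_by_iff ..

lemma openin_X_subbase: "s \<in> X_subbase r P f \<Longrightarrow> openin (X_space r P f) s"
  unfolding openin_X_space_iff by (rule generate_topology_on.Basis)

lemma topspace_X_space: "topspace (X_space r P f) = UNIV"
proof -
  have "x \<in> \<Union> (X_subbase r P f)" for x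
  proof (cases x)
    case None
    have "UNIV - Some ` (P 0 \<times> UNIV) \<in> X_subbase r P f" by (simp add: X_subbase_def)
    with None show ?thesis by blast
  next
    case (Some p)
    have "{Some p} \<in> X_subbase r P f" by (simp add: X_subbase_def)
    with Some show ?thesis by blast
  qed
  then show ?thesis
    unfolding X_space_def X_subbase_def topology_generated_by_topspace by blast
qed

lemma openin_X_space_isolated:
  assumes "None \<notin> W"
  shows "openin (X_space r P f) W"
proof -
  have "openin (X_space r P f) {x}" if "x \<in> W" for x
  proof -
    from that assms obtain p where "x = Some p" by (cases x) auto
    then show ?thesis by (auto intro: openin_X_subbase simp: X_subbase_def)
  qed
  then show ?thesis by (subst openin_subopen) blast
qed

lemma closedin_X_space_None: "closedin (X_space r P f) {None}"
  unfolding closedin_def topspace_X_space by (auto intro: openin_X_space_isolated)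

lemma closedin_X_space_column:
  assumes "S \<subseteq> Some ` (P j \<times> UNIV)"
  shows "closedin (X_space r P f) S"
proof -
  have "openin (X_space r P f) (UNIV - Some ` (P j \<times> UNIV))"
    by (rule openin_X_subbase) (auto simp: X_subbase_def)
  moreover have "openin (X_space r P f) (Some ` (P j \<times> UNIV) - S)"
    by (rule openin_X_space_isolated) blast
  moreover have "UNIV - S = (UNIV - Some ` (P j \<times> UNIV)) \<union> (Some ` (P j \<times> UNIV) - S)"
    using assms by blast
  ultimately have "openin (X_space r P f) (UNIV - S)" by (simp add: openin_Un)
  then show ?thesis unfolding closedin_def topspace_X_space by simp
qed

definition X_tail :: "('a \<times> 'a) set \<Rightarrow> (nat \<Rightarrow> nat set) \<Rightarrow> nat set \<Rightarrow> 'a set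
    \<Rightarrow> (nat \<times> 'a) option set" where
  "X_tail r P F G = Some ` ((\<Union>i\<in>-F. P i) \<times> (UNIV - (\<Union>\<alpha>\<in>G. Order_Relation.underS r \<alpha>)))"

lemma X_tail_mono: "F \<subseteq> F' \<Longrightarrow> G \<subseteq> G' \<Longrightarrow> X_tail r P F' G' \<subseteq> X_tail r P F G"
  unfolding X_tail_def by (intro image_mono Sigma_mono) auto

lemma X_subbase_cases:
  assumes "s \<in> X_subbase r P f" "None \<in> s"
  obtains (column) j where "s = UNIV - Some ` (P j \<times> UNIV)"
    | (level) \<gamma> where "s = UNIV - Some ` (Zset P (f \<gamma>) \<times> Order_Relation.underS r \<gamma>)"
  using assms unfolding X_subbase_def by blast

lemma X_tail_subset_subbase:
  assumes P_disj: "\<And>i j. i \<noteq> j \<Longrightarrow> P i \<inter> P j = {}"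
    and "s \<in> X_subbase r P f" "None \<in> s"
  shows "\<exists>F G. finite F \<and> finite G \<and> X_tail r P F G \<subseteq> s"
  using assms(2,3)
proof (cases rule: X_subbase_cases)
  case (column j)
  have "X_tail r P {j} {} \<subseteq> s"
    unfolding column X_tail_def using P_disj by blast
  then show ?thesis by (intro exI[of _ "{j}"] exI[of _ "{}"]) simp
next
  case (level \<gamma>)
  have "X_tail r P {} {\<gamma>} \<subseteq> s"
    unfolding level X_tail_def by blast
  then show ?thesis by (intro exI[of _ "{}"] exI[of _ "{\<gamma>}"]) simp
qed

lemma X_space_nhds_None:
  assumes P_disj: "\<And>i j. i \<noteq> j \<Longrightarrow> P i \<inter> P j = {}"
    and "openin (X_space r P f) W" "None \<in> W"
  shows "\<exists>F G. finite F \<and> finite G \<and> X_tail r P F G \<subseteq> W"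
proof -
  have "generate_topology_on (X_subbase r P f) W"
    using assms(2) unfolding openin_X_space_iff .
  then have "None \<in> W \<longrightarrow> (\<exists>F G. finite F \<and> finite G \<and> X_tail r P F G \<subseteq> W)"
  proof (induction rule: generate_topology_on.induct)
    case Empty
    then show ?case by simp
  next
    case (Int a b)
    show ?case
    proof
      assume "None \<in> a \<inter> b"
      then obtain F1 G1 F2 G2 where "finite F1" "finite G1" "finite F2" "finite G2"
        and "X_tail r P F1 G1 \<subseteq> a" "X_tail r P F2 G2 \<subseteq> b"
        using Int.IH by (meson IntD1 IntD2)
      moreover have "X_tail r P (F1 \<union> F2) (G1 \<union> G2) \<subseteq> X_tail r P F1 G1"
        "X_tail r P (F1 \<union> F2) (G1 \<union> G2) \<subseteq> X_tail r P F2 G2"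
        by (simp_all add: X_tail_mono)
      ultimately show "\<exists>F G. finite F \<and> finite G \<and> X_tail r P F G \<subseteq> a \<inter> b"
        by (intro exI[of _ "F1 \<union> F2"] exI[of _ "G1 \<union> G2"]) auto
    qed
  next
    case (UN K)
    show ?case
    proof
      assume "None \<in> \<Union>K"
      then obtain w where "w \<in> K" "None \<in> w" by blast
      with UN.IH obtain F G where "finite F" "finite G" "X_tail r P F G \<subseteq> w"
        by meson
      with \<open>w \<in> K\<close> show "\<exists>F G. finite F \<and> finite G \<and> X_tail r P F G \<subseteq> \<Union>K"
        by (intro exI[of _ F] exI[of _ G]) auto
    qed
  next
    case (Basis s)
    then show ?case by (intro impI X_tail_subset_subbase[OF P_disj])
  qed
  then show ?thesis using assms(3) by (rule mp)
qed

definition column_above :: "(nat \<Rightarrow> nat set) \<Rightarrow> (nat \<Rightarrow> nat) \<Rightarrow> nat option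
    \<Rightarrow> (nat \<times> 'a) option set" where "column_above P h y =
    (case y of None \<Rightarrow> {None} | Some n \<Rightarrow> Some ` ({k \<in> P (h n). n < k} \<times> UNIV))"

lemma lsc_column_above:
  assumes omega1: "is_omega1 r"
    and P_inf: "\<And>i. infinite (P i)"
    and P_disj: "\<And>i j. i \<noteq> j \<Longrightarrow> P i \<inter> P j = {}"
    and ult: "is_ultrafilter U"
    and fibres: "\<And>c. h -` {c} \<notin> U"
  shows "lsc (Y_space U) (X_space r P f) (column_above P h)"
proof -
  have filt: "is_filter U" using ult unfolding is_ultrafilter_def by blast
  have nonempty: "column_above P h y \<noteq> {}" for y
    using P_inf by (cases y) (auto simp: column_above_def infinite_nat_iff_unbounded)
  have closed: "closedin (X_space r P f) (column_above P h y)" for y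
  proof (cases y)
    case None
    then show ?thesis by (simp add: column_above_def closedin_X_space_None)
  next
    case (Some n)
    then show ?thesis
      unfolding column_above_def by (auto intro!: closedin_X_space_column[where j = "h n"])
  qed
  have "{n. column_above P h (Some n) \<inter> W \<noteq> {}} \<in> U"
    if W: "openin (X_space r P f) W" "None \<in> W" for W :: "(nat \<times> 'a) option set"
  proof -
    obtain F G where "finite F" "finite G" and tail: "X_tail r P F G \<subseteq> W"
      using X_space_nhds_None[OF P_disj W] by blast
    obtain \<beta> where \<beta>: "\<forall>\<alpha>\<in>G. \<beta> \<notin> Order_Relation.underS r \<alpha>"
      using omega1_above_finite[OF omega1 \<open>finite G\<close>] by blast
    have "column_above P h (Some n) \<inter> W \<noteq> {}" if "h n \<notin> F" for n
    proof -
      obtain k where "k \<in> P (h n)" "n < k"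
        using P_inf[of "h n"] by (auto simp: infinite_nat_iff_unbounded)
      with \<beta> \<open>h n \<notin> F\<close> have "Some (k, \<beta>) \<in> X_tail r P F G"
        unfolding X_tail_def by blast
      moreover have "Some (k, \<beta>) \<in> column_above P h (Some n)"
        using \<open>k \<in> P (h n)\<close> \<open>n < k\<close> by (simp add: column_above_def)
      ultimately show ?thesis using tail by blast
    qed
    then have "{n. h n \<notin> F} \<subseteq> {n. column_above P h (Some n) \<inter> W \<noteq> {}}" by blast
    moreover have "{n. h n \<notin> F} \<in> U"
      using ultrafilter_avoids_finitely_many_fibres[OF ult fibres \<open>finite F\<close>] .
    ultimately show ?thesis using filt unfolding is_filter_def by blast
  qed
  then have "openin (Y_space U) {y \<in> topspace (Y_space U). column_above P h y \<inter> W \<noteq> {}}"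
    if "openin (X_space r P f) W" for W
    using that by (simp add: openin_Y_space[OF filt] topspace_Y_space[OF filt] column_above_def)
  with nonempty closed show ?thesis unfolding lsc_def by blast
qed

lemma selection_column_above_finite_to_one:
  assumes omega1: "is_omega1 r"
    and filt: "is_filter U"
    and cont: "continuous_map (Y_space U) (X_space r P f) s"
    and sel: "\<And>y. s y \<in> column_above P h y"
  obtains A where "A \<in> U" and "\<And>m. finite {n\<in>A. h n = m}"
proof -
  have "s None = None" using sel[of None] by (simp add: column_above_def)
  define k where "k n = fst (the (s (Some n)))" for n
  define \<beta> where "\<beta> n = snd (the (s (Some n)))" for n
  have s: "s (Some n) = Some (k n, \<beta> n)" and k: "k n \<in> P (h n)" "n < k n" for n
    using sel[of "Some n"] by (auto simp: column_above_def k_def \<beta>_def)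
  have "countable (range \<beta>)" by simp
  then obtain \<alpha> where \<alpha>: "range \<beta> \<subseteq> Order_Relation.underS r \<alpha>"
    by (rule omega1_countable_bounded[OF omega1])
  let ?V = "UNIV - Some ` (Zset P (f \<alpha>) \<times> Order_Relation.underS r \<alpha>)"
  let ?A = "{n. s (Some n) \<in> ?V}"
  have "openin (X_space r P f) ?V" by (rule openin_X_subbase) (auto simp: X_subbase_def)
  then have "openin (Y_space U) {y \<in> topspace (Y_space U). s y \<in> ?V}"
    using cont by (rule openin_continuous_map_preimage[rotated])
  with \<open>s None = None\<close> have "?A \<in> U"
    unfolding openin_Y_space[OF filt] topspace_Y_space[OF filt] by simp
  moreover have "n < f \<alpha> (h n)" if "n \<in> ?A" for n
  proof -
    from that \<alpha> have "k n \<notin> Zset P (f \<alpha>)" by (auto simp: s)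
    then have "k n \<le> f \<alpha> (h n)" using k(1) unfolding Zset_def by (auto simp: not_less)
    with k(2)[of n] show ?thesis by simp
  qed
  then have "{n\<in>?A. h n = m} \<subseteq> {..< f \<alpha> m}" for m by auto
  then have "finite {n\<in>?A. h n = m}" for m by (meson finite_lessThan finite_subset)
  ultimately show thesis using that by blast
qed

theorem mainTheorem5:
  fixes r :: "('a \<times> 'a) set" and f :: "'a \<Rightarrow> nat \<Rightarrow> nat" and P :: "nat \<Rightarrow> nat set"
  assumes omega1: "is_omega1 r"
    and d_omega1: "dominating_number_is_omega1 TYPE('a)"
    and incr: "\<And>\<alpha> \<beta>. (\<alpha>, \<beta>) \<in> r \<Longrightarrow> \<alpha> \<noteq> \<beta> \<Longrightarrow> less_star (f \<alpha>) (f \<beta>)"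
    and dom: "\<And>g. \<exists>\<alpha>. less_star g (f \<alpha>)"
    and P_inf: "\<And>i. infinite (P i)"
    and P_disj: "\<And>i j. i \<noteq> j \<Longrightarrow> P i \<inter> P j = {}"
    and P_cover: "(\<Union>i. P i) = UNIV"
  shows "\<forall>U. is_ultrafilter U \<and> \<not> P_point U \<longrightarrow> \<not> U_selective (X_space r P f) U"
proof (intro allI impI notI, elim conjE)
  fix U assume ult: "is_ultrafilter U" and not_P: "\<not> P_point U"
    and sel: "U_selective (X_space r P f) U"
  have filt: "is_filter U" using ult unfolding is_ultrafilter_def by blast
  obtain h :: "nat \<Rightarrow> nat" where fibres: "\<And>c. h -` {c} \<notin> U"
    and not_finite_to_one: "\<And>A. A \<in> U \<Longrightarrow> \<exists>m. infinite {n\<in>A. h n = m}"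
    using not_P_point_witness[OF ult not_P] by blast
  have "lsc (Y_space U) (X_space r P f) (column_above P h)"
    using lsc_column_above[OF omega1 P_inf P_disj ult fibres] .
  then obtain s where cont: "continuous_map (Y_space U) (X_space r P f) s"
    and selects: "\<forall>y\<in>topspace (Y_space U). s y \<in> column_above P h y"
    using sel unfolding U_selective_def selective_def by blast
  from selects have selects': "s y \<in> column_above P h y" for y
    by (simp add: topspace_Y_space[OF filt])
  obtain A where "A \<in> U" "\<And>m. finite {n\<in>A. h n = m}"
    using selection_column_above_finite_to_one[OF omega1 filt cont selects'] by blast
  with not_finite_to_one show False by blast
qed

end
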